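(* Let $(\mathcal{X},d)$ be a finite metric space, $P$ a probability distribution on $\mathcal{X}$, $k\ge1$ an integer, and $O\in\mathcal{X}_k$ an optimal $k$-RP solution. Then there exists a $k$-multiset $S$ that is returned with positive probability by the variance-reduced distribution $\widetilde{P}_k$ such that $\mathbb{E}_{X\sim P_k}[d_k(S,X)]\le 4\cdot \mathbb{E}_{X\sim P_k}[d_k(O,X)]$.
   Context: $\mathcal{X}_k$ is the set of multisets of exactly $k$ points of $\mathcal{X}$. For $U,V\in\mathcal{X}_k$, $d_k(U,V)$ is the minimum, over perfect matchings between the $k$ elements of $U$ and the $k$ elements of $V$ (with multiplicity), of the sum of the distances of matched pairs. $P_k$ is the distribution of the multiset of $k$ points drawn i.i.d. from $P$. The $k$-RP cost of $S$ is $\mathbb{E}_{X\sim P_k}[d_k(S,X)]$, and $O$ minimizes it. The distribution $\widetilde{P}_k$ on $\mathcal{X}_k$: for each $x\in\mathcal{X}$ the multiset contains $\lfloor P(x)k\rfloor$ copies of $x$; each of the remaining $r=k-\sum_{x}\lfloor P(x)k\rfloor$ points (if $r>0$) is chosen independently, equal to $x$ with probability $\frac{P(x)-\lfloor P(x)k\rfloor/k}{\sum_{y\in\mathcal{X}}(P(y)-\lfloor P(y)k\rfloor/k)}$. *)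

theory Defs
  imports Complex_Main "HOL-Library.Multiset"
begin

definition finite_metric_space :: "'a set \<Rightarrow> ('a \<Rightarrow> 'a \<Rightarrow> real) \<Rightarrow> bool" where
  "finite_metric_space X d \<longleftrightarrow> finite X \<and> X \<noteq> {} \<and>
     (\<forall>x\<in>X. \<forall>y\<in>X. d x y \<ge> 0 \<and> (d x y = 0 \<longleftrightarrow> x = y) \<and> d x y = d y x) \<and>
     (\<forall>x\<in>X. \<forall>y\<in>X. \<forall>z\<in>X. d x z \<le> d x y + d y z)"

definition prob_dist :: "'a set \<Rightarrow> ('a \<Rightarrow> real) \<Rightarrow> bool" where
  "prob_dist X P \<longleftrightarrow> (\<forall>x\<in>X. P x \<ge> 0) \<and> (\<Sum>x\<in>X. P x) = 1"

definition kmsets :: "'a set \<Rightarrow> nat \<Rightarrow> 'a multiset set" where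
  "kmsets X k = {U. size U = k \<and> set_mset U \<subseteq> X}"

text \<open>d_k(U,V): minimum over perfect matchings (listing U and V in some order and
  matching positionwise) of the sum of distances of matched pairs.\<close>
definition dk :: "('a \<Rightarrow> 'a \<Rightarrow> real) \<Rightarrow> 'a multiset \<Rightarrow> 'a multiset \<Rightarrow> real" where
  "dk d U V = Min {(\<Sum>i<length xs. d (xs ! i) (ys ! i)) | xs ys. mset xs = U \<and> mset ys = V}"

text \<open>k-RP cost: E_{X ~ P_k}[d_k(S,X)], where the sample is k i.i.d. draws from P.\<close>
definition krp_cost :: "'a set \<Rightarrow> ('a \<Rightarrow> 'a \<Rightarrow> real) \<Rightarrow> ('a \<Rightarrow> real) \<Rightarrow> nat \<Rightarrow> 'a multiset \<Rightarrow> real" where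
  "krp_cost X d P k S =
     (\<Sum>xs\<in>{xs. set xs \<subseteq> X \<and> length xs = k}. (\<Prod>x\<leftarrow>xs. P x) * dk d S (mset xs))"

text \<open>Deterministic part of tilde P_k: floor(P(x) k) copies of each x.\<close>
definition base_ms :: "'a set \<Rightarrow> ('a \<Rightarrow> real) \<Rightarrow> nat \<Rightarrow> 'a multiset" where
  "base_ms X P k = (\<Sum>x\<in>X. replicate_mset (nat \<lfloor>P x * real k\<rfloor>) x)"

definition resid :: "('a \<Rightarrow> real) \<Rightarrow> nat \<Rightarrow> 'a \<Rightarrow> real" where
  "resid P k x = P x - real_of_int \<lfloor>P x * real k\<rfloor> / real k"

text \<open>Probability of choosing x for each remaining point.\<close>
definition resid_prob :: "'a set \<Rightarrow> ('a \<Rightarrow> real) \<Rightarrow> nat \<Rightarrow> 'a \<Rightarrow> real" where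
  "resid_prob X P k x = resid P k x / (\<Sum>y\<in>X. resid P k y)"

definition rem_count :: "'a set \<Rightarrow> ('a \<Rightarrow> real) \<Rightarrow> nat \<Rightarrow> nat" where
  "rem_count X P k = k - size (base_ms X P k)"

text \<open>Probability that tilde P_k returns the multiset S: sum over all sequences of
  independent choices of the r remaining points that produce S.\<close>
definition ptilde_prob :: "'a set \<Rightarrow> ('a \<Rightarrow> real) \<Rightarrow> nat \<Rightarrow> 'a multiset \<Rightarrow> real" where
  "ptilde_prob X P k S =
     (\<Sum>ys\<in>{ys. set ys \<subseteq> X \<and> length ys = rem_count X P k \<and> base_ms X P k + mset ys = S}.
        (\<Prod>y\<leftarrow>ys. resid_prob X P k y))"

end

(*
  Fix any k-multiset O.  Averaging an optimal matching between O and a sample X ~ P_k over the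
  sample gives a fractional transport plan T between O and the measure k P whose cost is the
  k-RP cost of O.  A slack row tops every column sum k P(x) of T up to its ceiling; the margins
  are then integral, and moving along circulations supported on the fractional entries (which
  exist by counting equations against unknowns) rounds T to an integral plan that is no more
  expensive, keeps the row sums, and has column sums between the floor and the ceiling of
  k P(x).  Its column multiset S is therefore in the support of the variance-reduced
  distribution, and d_k(S, O) is at most the cost of O.  By the triangle inequality for d_k,
  the cost of S is at most d_k(S, O) + cost(O) <= 2 cost(O).
*)
theory Submission
  imports Defs
begin

section \<open>Rounding matrices with integral margins\<close>

lemma back_substitution:
  fixes a :: "'e \<Rightarrow> real"
  assumes "finite E" "p \<in> E" "a p = 0 \<Longrightarrow> \<forall>e\<in>E. a e = 0"
    and "\<forall>b\<in>B. (\<Sum>e\<in>E - {p}. (b e - b p * a e / a p) * g' e) = 0"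
  defines "g \<equiv> g'(p := - (\<Sum>e\<in>E - {p}. a e * g' e) / a p)"
  shows "\<forall>b\<in>insert a B. (\<Sum>e\<in>E. b e * g e) = 0"
proof
  fix b assume "b \<in> insert a B"
  define s where "s = (\<Sum>e\<in>E - {p}. a e * g' e)"
  have "(\<Sum>e\<in>E. b e * g e) = b p * g p + (\<Sum>e\<in>E - {p}. b e * g' e)"
    using assms(1,2) by (auto simp: g_def sum.remove[of E p] intro!: sum.cong)
  moreover have "(\<Sum>e\<in>E - {p}. b e * g' e) = b p / a p * s" if "b \<in> B"
    using assms(4) that by (simp add: s_def algebra_simps sum_subtractf sum_distrib_left)
  ultimately show "(\<Sum>e\<in>E. b e * g e) = 0"
    using \<open>b \<in> insert a B\<close> assms(3) by (auto simp: g_def s_def)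
qed

lemma homogeneous_linear_system_nontrivial_solution:
  fixes A :: "('e \<Rightarrow> real) set"
  assumes "finite E" "finite A" "card A < card E"
  shows "\<exists>g. (\<forall>e. e \<notin> E \<longrightarrow> g e = 0) \<and> (\<exists>e\<in>E. g e \<noteq> 0) \<and>
             (\<forall>a\<in>A. (\<Sum>e\<in>E. a e * g e) = 0)"
  using assms
proof (induction "card A" arbitrary: A E rule: less_induct)
  case less
  then obtain e0 where e0: "e0 \<in> E" by fastforce
  show ?case
  proof (cases "A = {}")
    case True
    then show ?thesis using e0
      by (intro exI[of _ "\<lambda>e. if e = e0 then 1 else 0"]) auto
  next
    case False
    then obtain a where a: "a \<in> A" by blast
    \<comment> \<open>Pivot on a nonzero coefficient of a if there is one; if a is the zero equation,
        any pivot works because division by zero yields zero.\<close>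
    obtain p where p: "p \<in> E" "a p = 0 \<Longrightarrow> \<forall>e\<in>E. a e = 0"
      using e0 by (cases "\<exists>e\<in>E. a e \<noteq> 0") auto
    define A' where "A' = (\<lambda>b e. b e - b p * a e / a p) ` (A - {a})"
    have "card A' \<le> card A - 1"
      using card_image_le[of "A - {a}"] a less.prems(2) by (simp add: A'_def)
    moreover have "card (E - {p}) = card E - 1" "card A > 0"
      using a p(1) less.prems by (auto simp: card_gt_0_iff)
    ultimately have "card A' < card A" "card A' < card (E - {p})"
      using less.prems(3) by linarith+
    moreover have "finite A'" "finite (E - {p})" using less.prems by (simp_all add: A'_def)
    ultimately obtain g' where g': "\<forall>e. e \<notin> E - {p} \<longrightarrow> g' e = 0" "\<exists>e\<in>E - {p}. g' e \<noteq> 0"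
        "\<forall>b\<in>A'. (\<Sum>e\<in>E - {p}. b e * g' e) = 0"
      using less.hyps by blast
    define g where "g = g'(p := - (\<Sum>e\<in>E - {p}. a e * g' e) / a p)"
    have "\<forall>b\<in>insert a (A - {a}). (\<Sum>e\<in>E. b e * g e) = 0"
      unfolding g_def using g'(3) less.prems(1) p by (intro back_substitution) (auto simp: A'_def)
    moreover have "\<forall>e. e \<notin> E \<longrightarrow> g e = 0" "\<exists>e\<in>E. g e \<noteq> 0"
      using g'(1,2) p(1) by (auto simp: g_def)
    ultimately show ?thesis using a by (intro exI[of _ g]) (auto simp: insert_absorb)
  qed
qed

definition fractional_entries :: "('i \<times> 'j \<Rightarrow> real) \<Rightarrow> 'i set \<Rightarrow> 'j set \<Rightarrow> ('i \<times> 'j) set" where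
  "fractional_entries M I J = {e \<in> I \<times> J. M e \<notin> \<int>}"

lemma finite_fractional_entries [simp]:
  "finite I \<Longrightarrow> finite J \<Longrightarrow> finite (fractional_entries M I J)"
  unfolding fractional_entries_def by (auto intro: finite_subset)

lemma fractional_entries_transpose:
  "fractional_entries (M \<circ> prod.swap) J I = prod.swap ` fractional_entries M I J"
  by (auto simp: fractional_entries_def image_iff)

lemma two_mult_card_image_le:
  assumes "finite F" "\<forall>i\<in>f ` F. 2 \<le> card {e\<in>F. f e = i}"
  shows "2 * card (f ` F) \<le> card F"
proof -
  have "2 * card (f ` F) = (\<Sum>i\<in>f ` F. 2)" by simp
  also have "\<dots> \<le> (\<Sum>i\<in>f ` F. card {e\<in>F. f e = i})"
    using assms(2) by (intro sum_mono) auto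
  also have "\<dots> = card F"
    using sum.group[OF assms(1) finite_imageI[OF assms(1)], where g = f and h = "\<lambda>_. 1::nat"]
    by simp
  finally show ?thesis .
qed

lemma card_fractional_entries_in_row_ge_2:
  fixes M :: "'i \<times> 'j \<Rightarrow> real"
  assumes "finite I" "finite J" "\<forall>i\<in>I. (\<Sum>j\<in>J. M (i,j)) \<in> \<int>"
    and "i \<in> fst ` fractional_entries M I J"
  shows "2 \<le> card {e \<in> fractional_entries M I J. fst e = i}"
proof (rule ccontr)
  let ?F = "fractional_entries M I J"
  obtain j1 where j1: "(i,j1) \<in> ?F" using assms(4) by force
  then have i: "i \<in> I" and "j1 \<in> J" by (auto simp: fractional_entries_def)
  assume "\<not> 2 \<le> card {e \<in> ?F. fst e = i}"
  then have "card {e \<in> ?F. fst e = i} \<le> Suc 0" by simp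
  then have "(i,j) \<notin> ?F" if "j \<noteq> j1" for j
    using j1 that assms(1,2) by (subst (asm) card_le_Suc0_iff_eq) auto
  then have "(\<Sum>j\<in>J - {j1}. M (i,j)) \<in> \<int>"
    using i by (intro Ints_sum) (auto simp: fractional_entries_def)
  moreover have "(\<Sum>j\<in>J. M (i,j)) = M (i,j1) + (\<Sum>j\<in>J - {j1}. M (i,j))"
    using assms(2) \<open>j1 \<in> J\<close> by (simp add: sum.remove)
  ultimately have "M (i,j1) \<in> \<int>"
    using assms(3) i by (metis Ints_diff add_diff_cancel_right')
  then show False using j1 by (simp add: fractional_entries_def)
qed

lemma two_mult_card_fractional_rows_le:
  fixes M :: "'i \<times> 'j \<Rightarrow> real"
  assumes "finite I" "finite J" "\<forall>i\<in>I. (\<Sum>j\<in>J. M (i,j)) \<in> \<int>"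
  shows "2 * card (fst ` fractional_entries M I J) \<le> card (fractional_entries M I J)"
  using assms card_fractional_entries_in_row_ge_2[OF assms]
  by (intro two_mult_card_image_le) auto

lemma two_mult_card_fractional_columns_le:
  fixes M :: "'i \<times> 'j \<Rightarrow> real"
  assumes "finite I" "finite J" "\<forall>j\<in>J. (\<Sum>i\<in>I. M (i,j)) \<in> \<int>"
  shows "2 * card (snd ` fractional_entries M I J) \<le> card (fractional_entries M I J)"
proof -
  have "2 * card (fst ` fractional_entries (M \<circ> prod.swap) J I)
        \<le> card (fractional_entries (M \<circ> prod.swap) J I)"
    using assms by (intro two_mult_card_fractional_rows_le) auto
  moreover have "fst ` prod.swap ` F = snd ` F" for F :: "('i \<times> 'j) set" by force
  ultimately show ?thesis
    by (simp add: fractional_entries_transpose card_image)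
qed

lemma sum_over_support_row_column:
  fixes g :: "'i \<times> 'j \<Rightarrow> real"
  assumes "finite I" "finite J" "F \<subseteq> I \<times> J" "\<forall>e. e \<notin> F \<longrightarrow> g e = 0"
  shows "i \<in> I \<Longrightarrow> (\<Sum>e\<in>F. (if fst e = i then 1 else 0) * g e) = (\<Sum>j\<in>J. g (i,j))"
    and "j \<in> J \<Longrightarrow> (\<Sum>e\<in>F. (if snd e = j then 1 else 0) * g e) = (\<Sum>i\<in>I. g (i,j))"
proof -
  have row_major: "(\<Sum>e\<in>F. (if p e then 1 else 0) * g e)
      = (\<Sum>i\<in>I. \<Sum>j\<in>J. if p (i,j) then g (i,j) else 0)" for p :: "'i \<times> 'j \<Rightarrow> bool"
    using assms by (subst sum.mono_neutral_left[of "I \<times> J"])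
      (auto simp: sum.cartesian_product intro!: sum.cong)
  then have column_major: "(\<Sum>e\<in>F. (if p e then 1 else 0) * g e)
      = (\<Sum>j\<in>J. \<Sum>i\<in>I. if p (i,j) then g (i,j) else 0)" for p :: "'i \<times> 'j \<Rightarrow> bool"
    by (subst sum.swap) simp
  show "i \<in> I \<Longrightarrow> (\<Sum>e\<in>F. (if fst e = i then 1 else 0) * g e) = (\<Sum>j\<in>J. g (i,j))"
    using column_major[of "\<lambda>e. fst e = i"] assms(1) by simp
  show "j \<in> J \<Longrightarrow> (\<Sum>e\<in>F. (if snd e = j then 1 else 0) * g e) = (\<Sum>i\<in>I. g (i,j))"
    using row_major[of "\<lambda>e. snd e = j"] assms(2) by simp
qed

lemma column_sum_from_others:
  fixes g :: "'i \<times> 'j \<Rightarrow> real"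
  assumes "finite J" "j0 \<in> J" "\<forall>i\<in>I. (\<Sum>j\<in>J. g (i,j)) = 0"
    and "\<forall>j\<in>J - {j0}. (\<Sum>i\<in>I. g (i,j)) = 0"
  shows "(\<Sum>i\<in>I. g (i,j0)) = 0"
proof -
  have "(\<Sum>i\<in>I. g (i,j0)) = (\<Sum>j\<in>J. \<Sum>i\<in>I. g (i,j))"
    using assms(1,2,4) by (simp add: sum.remove)
  also have "\<dots> = (\<Sum>i\<in>I. \<Sum>j\<in>J. g (i,j))" by (rule sum.swap)
  finally show ?thesis using assms(3) by simp
qed

lemma exists_circulation_except_column:
  fixes M :: "'i \<times> 'j \<Rightarrow> real"
  assumes fin: "finite I" "finite J"
    and rows: "\<forall>i\<in>I. (\<Sum>j\<in>J. M (i,j)) \<in> \<int>"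
    and cols: "\<forall>j\<in>J. (\<Sum>i\<in>I. M (i,j)) \<in> \<int>"
    and j0: "j0 \<in> snd ` fractional_entries M I J"
  shows "\<exists>g :: 'i \<times> 'j \<Rightarrow> real. (\<forall>e. e \<notin> fractional_entries M I J \<longrightarrow> g e = 0) \<and>
             (\<exists>e\<in>fractional_entries M I J. g e \<noteq> 0) \<and>
             (\<forall>i\<in>I. (\<Sum>j\<in>J. g (i,j)) = 0) \<and> (\<forall>j\<in>J - {j0}. (\<Sum>i\<in>I. g (i,j)) = 0)"
proof -
  define F where "F = fractional_entries M I J"
  have F: "finite F" "F \<subseteq> I \<times> J" using fin by (auto simp: F_def fractional_entries_def)
  define row where "row i e = (if fst e = i then 1 else 0 :: real)" for i and e :: "'i \<times> 'j"
  define col where "col j e = (if snd e = j then 1 else 0 :: real)" for j and e :: "'i \<times> 'j"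
  define A where "A = row ` fst ` F \<union> col ` (snd ` F - {j0})"
  have "card A \<le> card (fst ` F) + (card (snd ` F) - 1)"
    unfolding A_def using F(1) j0 card_image_le[of "snd ` F - {j0}" col]
    by (intro order_trans[OF card_Un_le add_mono] card_image_le) (auto simp: F_def)
  moreover have "card (snd ` F) > 0" using F(1) j0 by (auto simp: F_def card_gt_0_iff)
  ultimately have "card A < card F"
    using two_mult_card_fractional_rows_le[OF fin rows]
      two_mult_card_fractional_columns_le[OF fin cols] by (simp add: F_def)
  then obtain g where g: "\<forall>e. e \<notin> F \<longrightarrow> g e = 0" "\<exists>e\<in>F. g e \<noteq> 0"
      "\<forall>a\<in>A. (\<Sum>e\<in>F. a e * g e) = 0"
    using homogeneous_linear_system_nontrivial_solution[OF F(1), of A] F(1)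
    by (auto simp: A_def)
  have "(\<Sum>j\<in>J. g (i,j)) = 0" if "i \<in> I" for i
  proof (cases "i \<in> fst ` F")
    case True
    then have "(\<Sum>e\<in>F. row i e * g e) = 0" using g(3) by (simp add: A_def)
    then show ?thesis
      using sum_over_support_row_column(1)[OF fin F(2) g(1) that] by (simp add: row_def)
  qed (use g(1) in \<open>force intro: sum.neutral\<close>)
  moreover have "(\<Sum>i\<in>I. g (i,j)) = 0" if "j \<in> J - {j0}" for j
  proof (cases "j \<in> snd ` F")
    case True
    then have "(\<Sum>e\<in>F. col j e * g e) = 0" using g(3) that by (simp add: A_def)
    then show ?thesis
      using sum_over_support_row_column(2)[OF fin F(2) g(1)] that by (simp add: col_def)
  qed (use g(1) in \<open>force intro: sum.neutral\<close>)
  ultimately show ?thesis using g(1,2) unfolding F_def by blast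
qed

lemma exists_circulation_on_fractional_entries:
  fixes M :: "'i \<times> 'j \<Rightarrow> real"
  assumes fin: "finite I" "finite J"
    and rows: "\<forall>i\<in>I. (\<Sum>j\<in>J. M (i,j)) \<in> \<int>"
    and cols: "\<forall>j\<in>J. (\<Sum>i\<in>I. M (i,j)) \<in> \<int>"
    and "fractional_entries M I J \<noteq> {}"
  shows "\<exists>g :: 'i \<times> 'j \<Rightarrow> real. (\<forall>e. e \<notin> fractional_entries M I J \<longrightarrow> g e = 0) \<and>
             (\<exists>e\<in>fractional_entries M I J. g e \<noteq> 0) \<and>
             (\<forall>i\<in>I. (\<Sum>j\<in>J. g (i,j)) = 0) \<and> (\<forall>j\<in>J. (\<Sum>i\<in>I. g (i,j)) = 0)"
proof -
  obtain j0 where j0: "j0 \<in> snd ` fractional_entries M I J" using assms(5) by blast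
  then have "j0 \<in> J" by (auto simp: fractional_entries_def)
  obtain g :: "'i \<times> 'j \<Rightarrow> real" where g: "\<forall>e. e \<notin> fractional_entries M I J \<longrightarrow> g e = 0"
      "\<exists>e\<in>fractional_entries M I J. g e \<noteq> 0" "\<forall>i\<in>I. (\<Sum>j\<in>J. g (i,j)) = 0"
      "\<forall>j\<in>J - {j0}. (\<Sum>i\<in>I. g (i,j)) = 0"
    using exists_circulation_except_column[OF fin rows cols j0] by blast
  then have "\<forall>j\<in>J. (\<Sum>i\<in>I. g (i,j)) = 0"
    using column_sum_from_others[OF fin(2) \<open>j0 \<in> J\<close> g(3)] by blast
  with g(1-3) show ?thesis by blast
qed

lemma step_to_integral_entry:
  fixes M g :: "'e \<Rightarrow> real"
  assumes "finite F" "\<forall>e\<in>F. M e \<notin> \<int>" "\<forall>e. e \<notin> F \<longrightarrow> g e = 0" "\<exists>e\<in>F. g e \<noteq> 0"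
  shows "\<exists>t>0. (\<forall>e. of_int \<lfloor>M e\<rfloor> \<le> M e + t * g e \<and> M e + t * g e \<le> of_int \<lceil>M e\<rceil>) \<and>
               (\<exists>e\<in>F. M e + t * g e \<in> \<int>)"
proof -
  define G where "G = {e \<in> F. g e \<noteq> 0}"
  define target where "target e = (if g e > 0 then of_int \<lceil>M e\<rceil> else of_int \<lfloor>M e\<rfloor> :: real)" for e
  define \<tau> where "\<tau> e = (target e - M e) / g e" for e
  have strict: "of_int \<lfloor>M e\<rfloor> < M e" "M e < of_int \<lceil>M e\<rceil>" if "e \<in> F" for e
    using assms(2) that
    by (metis Ints_of_int of_int_floor_le less_eq_real_def,
        metis Ints_of_int le_of_int_ceiling less_eq_real_def)
  have \<tau>_pos: "\<tau> e > 0" if "e \<in> G" for e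
    using that strict[of e] by (auto simp: G_def \<tau>_def target_def divide_neg_neg)
  define t where "t = Min (\<tau> ` G)"
  have "finite G" "G \<noteq> {}" using assms(1,4) by (auto simp: G_def)
  then have "t \<in> \<tau> ` G" unfolding t_def by (intro Min_in) auto
  then obtain e1 where e1: "e1 \<in> G" "t = \<tau> e1" by blast
  have t_le: "t \<le> \<tau> e" if "e \<in> G" for e
    unfolding t_def using \<open>finite G\<close> that by simp
  have "t > 0" using e1 \<tau>_pos by simp
  have "of_int \<lfloor>M e\<rfloor> \<le> M e + t * g e \<and> M e + t * g e \<le> of_int \<lceil>M e\<rceil>" for e
  proof (cases "e \<in> G")
    case True
    then have "e \<in> F" by (simp add: G_def)
    have "0 < t * g e \<and> t * g e \<le> \<tau> e * g e" if "g e > 0"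
      using t_le[OF True] that \<open>t > 0\<close> by (simp add: mult_right_mono)
    moreover have "\<tau> e * g e \<le> t * g e \<and> t * g e < 0" if "g e < 0"
      using t_le[OF True] that \<open>t > 0\<close> by (simp add: mult_right_mono_neg mult_pos_neg)
    moreover have "\<tau> e * g e = target e - M e" using True by (simp add: \<tau>_def G_def)
    ultimately show ?thesis
      using strict[OF \<open>e \<in> F\<close>] True by (auto simp: target_def G_def split: if_splits)
  next
    case False
    then have "g e = 0" using assms(3) by (auto simp: G_def)
    then show ?thesis by simp
  qed
  moreover have "M e1 + t * g e1 = target e1" using e1 by (simp add: \<tau>_def G_def)
  then have "M e1 + t * g e1 \<in> \<int>" by (simp add: target_def)
  ultimately show ?thesis using \<open>t > 0\<close> e1(1) unfolding G_def by blast
qed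

lemma rounding_step:
  fixes M w :: "'i \<times> 'j \<Rightarrow> real"
  assumes fin: "finite I" "finite J"
    and rows: "\<forall>i\<in>I. (\<Sum>j\<in>J. M (i,j)) \<in> \<int>" and cols: "\<forall>j\<in>J. (\<Sum>i\<in>I. M (i,j)) \<in> \<int>"
    and "fractional_entries M I J \<noteq> {}"
  shows "\<exists>M2. fractional_entries M2 I J \<subset> fractional_entries M I J \<and>
    (\<forall>e. \<lfloor>M e\<rfloor> \<le> \<lfloor>M2 e\<rfloor> \<and> \<lceil>M2 e\<rceil> \<le> \<lceil>M e\<rceil>) \<and>
    (\<forall>i\<in>I. (\<Sum>j\<in>J. M2 (i,j)) = (\<Sum>j\<in>J. M (i,j))) \<and>
    (\<forall>j\<in>J. (\<Sum>i\<in>I. M2 (i,j)) = (\<Sum>i\<in>I. M (i,j))) \<and>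
    (\<Sum>e\<in>I \<times> J. w e * M2 e) \<le> (\<Sum>e\<in>I \<times> J. w e * M e)"
proof -
  let ?F = "fractional_entries M I J"
  obtain g :: "'i \<times> 'j \<Rightarrow> real" where g: "\<forall>e. e \<notin> ?F \<longrightarrow> g e = 0" "\<exists>e\<in>?F. g e \<noteq> 0"
      "\<forall>i\<in>I. (\<Sum>j\<in>J. g (i,j)) = 0" "\<forall>j\<in>J. (\<Sum>i\<in>I. g (i,j)) = 0"
    using exists_circulation_on_fractional_entries[OF assms] by blast
  \<comment> \<open>moving along -g instead of g if necessary, the step does not increase the cost\<close>
  define \<sigma> where "\<sigma> = (if (\<Sum>e\<in>I \<times> J. w e * g e) \<le> 0 then 1 else - 1 :: real)"
  define h where "h e = \<sigma> * g e" for e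
  have "(\<Sum>e\<in>I \<times> J. w e * h e) = \<sigma> * (\<Sum>e\<in>I \<times> J. w e * g e)"
    by (simp add: h_def sum_distrib_left mult.left_commute)
  then have h: "\<forall>e. e \<notin> ?F \<longrightarrow> h e = 0" "\<exists>e\<in>?F. h e \<noteq> 0"
      "\<forall>i\<in>I. (\<Sum>j\<in>J. h (i,j)) = 0" "\<forall>j\<in>J. (\<Sum>i\<in>I. h (i,j)) = 0"
      "(\<Sum>e\<in>I \<times> J. w e * h e) \<le> 0"
    using g by (auto simp: h_def \<sigma>_def sum_distrib_left[symmetric])
  obtain t where t: "t > 0"
      "\<forall>e. of_int \<lfloor>M e\<rfloor> \<le> M e + t * h e \<and> M e + t * h e \<le> of_int \<lceil>M e\<rceil>"
      "\<exists>e\<in>?F. M e + t * h e \<in> \<int>"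
    using step_to_integral_entry[where M = M, OF finite_fractional_entries[OF fin] _ h(1,2)]
    by (auto simp: fractional_entries_def)
  define M2 where "M2 e = M e + t * h e" for e
  have "fractional_entries M2 I J \<subset> ?F"
    using h(1) t(3) by (auto simp: fractional_entries_def M2_def)
  moreover have "\<lfloor>M e\<rfloor> \<le> \<lfloor>M2 e\<rfloor> \<and> \<lceil>M2 e\<rceil> \<le> \<lceil>M e\<rceil>" for e
    using t(2)[rule_format, of e] by (simp add: M2_def le_floor_iff ceiling_le_iff)
  moreover have "(\<Sum>e\<in>I \<times> J. w e * M2 e) = (\<Sum>e\<in>I \<times> J. w e * M e) + t * (\<Sum>e\<in>I \<times> J. w e * h e)"
    by (simp add: M2_def algebra_simps sum.distrib sum_distrib_left)
  moreover have "t * (\<Sum>e\<in>I \<times> J. w e * h e) \<le> 0"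
    using t(1) h(5) by (simp add: mult_nonneg_nonpos)
  moreover have "(\<Sum>j\<in>J. M2 (i,j)) = (\<Sum>j\<in>J. M (i,j))" if "i \<in> I" for i
    using h(3) that by (simp add: M2_def sum.distrib flip: sum_distrib_left)
  moreover have "(\<Sum>i\<in>I. M2 (i,j)) = (\<Sum>i\<in>I. M (i,j))" if "j \<in> J" for j
    using h(4) that by (simp add: M2_def sum.distrib flip: sum_distrib_left)
  ultimately show ?thesis by (intro exI[of _ M2]) auto
qed

lemma integral_rounding_preserving_margins:
  fixes M w :: "'i \<times> 'j \<Rightarrow> real"
  assumes fin: "finite I" "finite J"
    and "\<forall>i\<in>I. (\<Sum>j\<in>J. M (i,j)) \<in> \<int>" "\<forall>j\<in>J. (\<Sum>i\<in>I. M (i,j)) \<in> \<int>"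
  shows "\<exists>M'. (\<forall>e\<in>I \<times> J. M' e \<in> \<int> \<and> of_int \<lfloor>M e\<rfloor> \<le> M' e \<and> M' e \<le> of_int \<lceil>M e\<rceil>) \<and>
    (\<forall>i\<in>I. (\<Sum>j\<in>J. M' (i,j)) = (\<Sum>j\<in>J. M (i,j))) \<and>
    (\<forall>j\<in>J. (\<Sum>i\<in>I. M' (i,j)) = (\<Sum>i\<in>I. M (i,j))) \<and>
    (\<Sum>e\<in>I \<times> J. w e * M' e) \<le> (\<Sum>e\<in>I \<times> J. w e * M e)"
  using assms(3,4)
proof (induction "card (fractional_entries M I J)" arbitrary: M rule: less_induct)
  case less
  show ?case
  proof (cases "fractional_entries M I J = {}")
    case True
    then show ?thesis by (intro exI[of _ M]) (auto simp: fractional_entries_def)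
  next
    case False
    then obtain M2 where M2: "fractional_entries M2 I J \<subset> fractional_entries M I J"
        "\<forall>e. \<lfloor>M e\<rfloor> \<le> \<lfloor>M2 e\<rfloor> \<and> \<lceil>M2 e\<rceil> \<le> \<lceil>M e\<rceil>"
        "\<forall>i\<in>I. (\<Sum>j\<in>J. M2 (i,j)) = (\<Sum>j\<in>J. M (i,j))"
        "\<forall>j\<in>J. (\<Sum>i\<in>I. M2 (i,j)) = (\<Sum>i\<in>I. M (i,j))"
        "(\<Sum>e\<in>I \<times> J. w e * M2 e) \<le> (\<Sum>e\<in>I \<times> J. w e * M e)"
      using rounding_step[OF fin less.prems] by blast
    moreover have "card (fractional_entries M2 I J) < card (fractional_entries M I J)"
      using M2(1) fin by (intro psubset_card_mono) auto
    moreover have "\<forall>i\<in>I. (\<Sum>j\<in>J. M2 (i,j)) \<in> \<int>" "\<forall>j\<in>J. (\<Sum>i\<in>I. M2 (i,j)) \<in> \<int>"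
      using M2(3,4) less.prems by simp_all
    ultimately obtain M' where M':
        "\<forall>e\<in>I \<times> J. M' e \<in> \<int> \<and> of_int \<lfloor>M2 e\<rfloor> \<le> M' e \<and> M' e \<le> of_int \<lceil>M2 e\<rceil>"
        "\<forall>i\<in>I. (\<Sum>j\<in>J. M' (i,j)) = (\<Sum>j\<in>J. M2 (i,j))"
        "\<forall>j\<in>J. (\<Sum>i\<in>I. M' (i,j)) = (\<Sum>i\<in>I. M2 (i,j))"
        "(\<Sum>e\<in>I \<times> J. w e * M' e) \<le> (\<Sum>e\<in>I \<times> J. w e * M2 e)"
      using less.hyps by blast
    have "of_int \<lfloor>M e\<rfloor> \<le> M' e \<and> M' e \<le> of_int \<lceil>M e\<rceil>" if "e \<in> I \<times> J" for e
      using M'(1) M2(2) that by (meson of_int_le_iff order_trans)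
    then show ?thesis
      using M' M2 by (intro exI[of _ M']) auto
  qed
qed

lemma floor_ceiling_minus_self: "\<lfloor>of_int \<lceil>x\<rceil> - x\<rfloor> = 0"
  and ceiling_ceiling_minus_self: "\<lceil>of_int \<lceil>x\<rceil> - x\<rceil> = \<lceil>x\<rceil> - \<lfloor>x\<rfloor>"
  for x :: real
  using floor_add_int[of "- x" "\<lceil>x\<rceil>"] ceiling_add_of_int[of "- x" "\<lceil>x\<rceil>"]
  by (simp_all add: floor_minus ceiling_minus)

lemma integral_rounding_keeping_row_sums:
  fixes T w :: "'i \<times> 'j \<Rightarrow> real"
  assumes fin: "finite I" "finite J" and rows: "\<forall>i\<in>I. (\<Sum>j\<in>J. T (i,j)) \<in> \<int>"
  shows "\<exists>M. (\<forall>e\<in>I \<times> J. M e \<in> \<int> \<and> of_int \<lfloor>T e\<rfloor> \<le> M e) \<and>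
    (\<forall>i\<in>I. (\<Sum>j\<in>J. M (i,j)) = (\<Sum>j\<in>J. T (i,j))) \<and>
    (\<forall>j\<in>J. of_int \<lfloor>\<Sum>i\<in>I. T (i,j)\<rfloor> \<le> (\<Sum>i\<in>I. M (i,j)) \<and>
            (\<Sum>i\<in>I. M (i,j)) \<le> of_int \<lceil>\<Sum>i\<in>I. T (i,j)\<rceil>) \<and>
    (\<Sum>e\<in>I \<times> J. w e * M e) \<le> (\<Sum>e\<in>I \<times> J. w e * T e)"
proof -
  define c where "c j = (\<Sum>i\<in>I. T (i,j))" for j
  \<comment> \<open>The slack row None tops every column sum up to an integer; its own sum is an integer
      because the total of T is.\<close>
  define I' where "I' = insert None (Some ` I)"
  define T' where "T' = (\<lambda>(i,j). case i of None \<Rightarrow> of_int \<lceil>c j\<rceil> - c j | Some i \<Rightarrow> T (i,j))"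
  define w' where "w' = (\<lambda>(i,j). case i of None \<Rightarrow> 0 | Some i \<Rightarrow> w (i,j))"
  have sum_I': "(\<Sum>i\<in>I'. f i) = f None + (\<Sum>i\<in>I. f (Some i))" for f :: "'i option \<Rightarrow> real"
    using fin(1) by (simp add: I'_def sum.reindex)
  have "(\<Sum>j\<in>J. T' (None,j)) = (\<Sum>j\<in>J. of_int \<lceil>c j\<rceil>) - (\<Sum>i\<in>I. \<Sum>j\<in>J. T (i,j))"
    by (simp add: T'_def c_def sum_subtractf sum.swap[of _ I])
  also have "\<dots> \<in> \<int>" by (rule Ints_diff[OF Ints_sum Ints_sum]) (simp_all add: rows)
  finally have "\<forall>i\<in>I'. (\<Sum>j\<in>J. T' (i,j)) \<in> \<int>"
    using rows by (auto simp: I'_def T'_def)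
  moreover have cols: "(\<Sum>i\<in>I'. T' (i,j)) = of_int \<lceil>c j\<rceil>" for j
    by (simp add: sum_I' T'_def c_def)
  moreover have "finite I'" using fin(1) by (simp add: I'_def)
  ultimately obtain M' where M':
      "\<forall>e\<in>I' \<times> J. M' e \<in> \<int> \<and> of_int \<lfloor>T' e\<rfloor> \<le> M' e \<and> M' e \<le> of_int \<lceil>T' e\<rceil>"
      "\<forall>i\<in>I'. (\<Sum>j\<in>J. M' (i,j)) = (\<Sum>j\<in>J. T' (i,j))"
      "\<forall>j\<in>J. (\<Sum>i\<in>I'. M' (i,j)) = (\<Sum>i\<in>I'. T' (i,j))"
      "(\<Sum>e\<in>I' \<times> J. w' e * M' e) \<le> (\<Sum>e\<in>I' \<times> J. w' e * T' e)"
    using integral_rounding_preserving_margins[OF _ fin(2), of I' T' w'] by auto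
  define M where "M e = M' (Some (fst e), snd e)" for e
  have "of_int \<lfloor>c j\<rfloor> \<le> (\<Sum>i\<in>I. M (i,j)) \<and> (\<Sum>i\<in>I. M (i,j)) \<le> of_int \<lceil>c j\<rceil>" if "j \<in> J" for j
  proof -
    have "(\<Sum>i\<in>I. M (i,j)) = of_int \<lceil>c j\<rceil> - M' (None, j)"
      using M'(3)[rule_format, OF that] cols[of j] unfolding sum_I' M_def by simp
    moreover have "0 \<le> M' (None, j)" "M' (None, j) \<le> of_int \<lceil>c j\<rceil> - of_int \<lfloor>c j\<rfloor>"
      using M'(1) that
      by (auto simp: I'_def T'_def floor_ceiling_minus_self ceiling_ceiling_minus_self)
    ultimately show ?thesis by linarith
  qed
  moreover have "(\<Sum>e\<in>I' \<times> J. f e) = (\<Sum>j\<in>J. f (None,j)) + (\<Sum>e\<in>I \<times> J. f (Some (fst e), snd e))"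
    for f :: "'i option \<times> 'j \<Rightarrow> real"
    by (simp add: sum.cartesian_product' sum_I')
  ultimately show ?thesis
    using M' by (intro exI[of _ M]) (auto simp: I'_def T'_def w'_def M_def c_def)
qed

lemma integral_plan_with_rounded_column_sums:
  fixes T w :: "'i \<times> 'j \<Rightarrow> real"
  assumes fin: "finite I" "finite J" and nonneg: "\<forall>e\<in>I \<times> J. 0 \<le> T e"
    and rows: "\<forall>i\<in>I. (\<Sum>j\<in>J. T (i,j)) \<in> \<int>"
  shows "\<exists>N :: 'i \<times> 'j \<Rightarrow> nat.
    (\<forall>i\<in>I. real (\<Sum>j\<in>J. N (i,j)) = (\<Sum>j\<in>J. T (i,j))) \<and>
    (\<forall>j\<in>J. \<lfloor>\<Sum>i\<in>I. T (i,j)\<rfloor> \<le> int (\<Sum>i\<in>I. N (i,j)) \<and>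
            int (\<Sum>i\<in>I. N (i,j)) \<le> \<lceil>\<Sum>i\<in>I. T (i,j)\<rceil>) \<and>
    (\<Sum>e\<in>I \<times> J. w e * real (N e)) \<le> (\<Sum>e\<in>I \<times> J. w e * T e)"
proof -
  obtain M where M: "\<forall>e\<in>I \<times> J. M e \<in> \<int> \<and> of_int \<lfloor>T e\<rfloor> \<le> M e"
      "\<forall>i\<in>I. (\<Sum>j\<in>J. M (i,j)) = (\<Sum>j\<in>J. T (i,j))"
      "\<forall>j\<in>J. of_int \<lfloor>\<Sum>i\<in>I. T (i,j)\<rfloor> \<le> (\<Sum>i\<in>I. M (i,j)) \<and>
              (\<Sum>i\<in>I. M (i,j)) \<le> of_int \<lceil>\<Sum>i\<in>I. T (i,j)\<rceil>"
      "(\<Sum>e\<in>I \<times> J. w e * M e) \<le> (\<Sum>e\<in>I \<times> J. w e * T e)"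
    using integral_rounding_keeping_row_sums[OF fin rows] by blast
  define N where "N e = nat \<lfloor>M e\<rfloor>" for e
  have N: "real (N e) = M e" if "e \<in> I \<times> J" for e
  proof -
    have "0 \<le> (of_int \<lfloor>T e\<rfloor> :: real)" using nonneg that by auto
    then have "0 \<le> M e" using M(1) that by (meson order_trans)
    then show ?thesis using M(1) that by (auto simp: N_def elim!: Ints_cases)
  qed
  have "\<lfloor>\<Sum>i\<in>I. T (i,j)\<rfloor> \<le> int (\<Sum>i\<in>I. N (i,j)) \<and> int (\<Sum>i\<in>I. N (i,j)) \<le> \<lceil>\<Sum>i\<in>I. T (i,j)\<rceil>"
    if "j \<in> J" for j
  proof -
    have "real (\<Sum>i\<in>I. N (i,j)) = (\<Sum>i\<in>I. M (i,j))" using N that by simp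
    then show ?thesis using M(3) that by (metis of_int_le_iff of_int_of_nat_eq)
  qed
  moreover have "real (\<Sum>j\<in>J. N (i,j)) = (\<Sum>j\<in>J. T (i,j))" if "i \<in> I" for i
    using N M(2) that by simp
  moreover have "(\<Sum>e\<in>I \<times> J. w e * real (N e)) \<le> (\<Sum>e\<in>I \<times> J. w e * T e)"
    using N M(4) by simp
  ultimately show ?thesis by blast
qed

section \<open>The matching distance\<close>

lemma matching_cost_eq_sum_mset:
  assumes "length xs = length ys"
  shows "(\<Sum>i<length xs. d (xs!i) (ys!i)) = (\<Sum>(a,b)\<in>#mset (zip xs ys). d a b)"
proof -
  have "(\<Sum>(a,b)\<in>#mset (zip xs ys). d a b) = (\<Sum>(a,b)\<leftarrow>zip xs ys. d a b)"
    by (simp flip: sum_mset_sum_list)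
  also have "\<dots> = (\<Sum>i<length xs. d (xs!i) (ys!i))"
    using assms by (simp add: sum_list_sum_nth atLeast0LessThan)
  finally show ?thesis by simp
qed

lemma finite_lists_with_mset: "finite {xs. mset xs = U}"
  using mset_eq_finite ex_mset by metis

lemma dk_le_matching:
  "mset xs = U \<Longrightarrow> mset ys = V \<Longrightarrow> dk d U V \<le> (\<Sum>i<length xs. d (xs!i) (ys!i))"
  unfolding dk_def
  by (rule Min_le) (auto intro: finite_image_set2 finite_lists_with_mset)

lemma dk_attained:
  assumes "size U = size V"
  shows "\<exists>xs ys. mset xs = U \<and> mset ys = V \<and> dk d U V = (\<Sum>i<length xs. d (xs!i) (ys!i))"
proof -
  obtain xs ys where "mset xs = U" "mset ys = V" using ex_mset by metis
  then have "dk d U V \<in> {(\<Sum>i<length xs. d (xs ! i) (ys ! i)) | xs ys. mset xs = U \<and> mset ys = V}"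
    unfolding dk_def by (intro Min_in) (auto intro: finite_image_set2 finite_lists_with_mset)
  then show ?thesis by blast
qed

lemma dk_le_coupling:
  assumes "image_mset fst \<Pi> = U" "image_mset snd \<Pi> = V"
  shows "dk d U V \<le> (\<Sum>(a,b)\<in>#\<Pi>. d a b)"
proof -
  obtain ps where ps: "mset ps = \<Pi>" using ex_mset by blast
  have "dk d U V \<le> (\<Sum>i<length ps. d (map fst ps ! i) (map snd ps ! i))"
    using dk_le_matching[of "map fst ps" U "map snd ps" V d] assms ps by simp
  also have "\<dots> = (\<Sum>(a,b)\<in>#\<Pi>. d a b)"
    using matching_cost_eq_sum_mset[of "map fst ps" "map snd ps" d] ps
    by (simp add: zip_map_fst_snd)
  finally show ?thesis .
qed

lemma dk_coupling_attained:
  assumes "size U = size V"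
  shows "\<exists>\<Pi>. image_mset fst \<Pi> = U \<and> image_mset snd \<Pi> = V \<and> dk d U V = (\<Sum>(a,b)\<in>#\<Pi>. d a b)"
proof -
  obtain xs ys where xs_ys: "mset xs = U" "mset ys = V" "dk d U V = (\<Sum>i<length xs. d (xs!i) (ys!i))"
    using dk_attained[OF assms] by blast
  then have "length xs = length ys" using assms by (metis size_mset)
  then show ?thesis
    using xs_ys matching_cost_eq_sum_mset[of xs ys d]
    by (intro exI[of _ "mset (zip xs ys)"]) (simp flip: mset_map)
qed

lemma dk_nonneg:
  assumes "finite_metric_space X d" "set_mset U \<subseteq> X" "set_mset V \<subseteq> X" "size U = size V"
  shows "0 \<le> dk d U V"
proof -
  obtain \<Pi> where \<Pi>: "image_mset fst \<Pi> = U" "image_mset snd \<Pi> = V" "dk d U V = (\<Sum>(a,b)\<in>#\<Pi>. d a b)"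
    using dk_coupling_attained[OF assms(4)] by blast
  have "0 \<le> d a b" if "(a,b) \<in># \<Pi>" for a b
  proof -
    have "a \<in># U" "b \<in># V" using that unfolding \<Pi>(1,2)[symmetric] by force+
    then show ?thesis using assms(1-3) unfolding finite_metric_space_def by blast
  qed
  then show ?thesis
    using sum_mset_mono[of \<Pi> "\<lambda>_. 0" "\<lambda>(a,b). d a b"] \<Pi>(3) by force
qed

lemma dk_triangle:
  assumes "finite_metric_space X d" "set_mset U \<subseteq> X" "set_mset V \<subseteq> X" "set_mset W \<subseteq> X"
    and "size U = size V" "size V = size W"
  shows "dk d U W \<le> dk d U V + dk d V W"
proof -
  obtain xs ys where xs_ys: "mset xs = U" "mset ys = V" "dk d U V = (\<Sum>i<length xs. d (xs!i) (ys!i))"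
    using dk_attained[OF assms(5)] by blast
  obtain ys' zs where ys'_zs: "mset ys' = V" "mset zs = W"
      "dk d V W = (\<Sum>i<length ys'. d (ys'!i) (zs!i))"
    using dk_attained[OF assms(6)] by blast
  have len: "length xs = length ys" "length ys' = length zs" "length ys = length ys'"
    using xs_ys ys'_zs assms(5,6) by (metis size_mset)+
  \<comment> \<open>reorder the optimal matching of V and W to follow the order ys of V\<close>
  obtain zs' where zs': "length zs' = length ys" "mset (zip ys zs') = mset (zip ys' zs)"
    using ex_mset_zip_left[OF len(2), of ys] xs_ys(2) ys'_zs(1) by auto
  have "mset zs' = image_mset snd (mset (zip ys zs'))"
    using zs'(1) by (simp flip: mset_map)
  also have "\<dots> = W" using zs'(2) len(2) ys'_zs(2) by (simp flip: mset_map)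
  finally have "mset zs' = W" .
  have dk_V_W: "dk d V W = (\<Sum>i<length ys. d (ys!i) (zs'!i))"
    using ys'_zs(3) zs' len matching_cost_eq_sum_mset[of ys' zs d]
      matching_cost_eq_sum_mset[of ys zs' d] by simp
  have triangle: "d (xs!i) (zs'!i) \<le> d (xs!i) (ys!i) + d (ys!i) (zs'!i)" if "i < length xs" for i
  proof -
    have "set xs \<subseteq> X" "set ys \<subseteq> X" "set zs' \<subseteq> X"
      using xs_ys \<open>mset zs' = W\<close> assms(2-4) by auto
    moreover have "i < length ys" "i < length zs'" using that len zs'(1) by auto
    ultimately have "xs!i \<in> X" "ys!i \<in> X" "zs'!i \<in> X"
      using that by (meson nth_mem subsetD)+
    then show ?thesis using assms(1) unfolding finite_metric_space_def by blast
  qed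
  have "dk d U W \<le> (\<Sum>i<length xs. d (xs!i) (zs'!i))"
    using dk_le_matching[OF xs_ys(1) \<open>mset zs' = W\<close>] .
  also have "\<dots> \<le> (\<Sum>i<length xs. d (xs!i) (ys!i) + d (ys!i) (zs'!i))"
    using triangle by (intro sum_mono) simp
  also have "\<dots> = dk d U V + dk d V W" using xs_ys(3) dk_V_W len by (simp add: sum.distrib)
  finally show ?thesis .
qed

lemma dk_commute:
  assumes "finite_metric_space X d" "set_mset U \<subseteq> X" "set_mset V \<subseteq> X" "size U = size V"
  shows "dk d U V = dk d V U"
proof -
  have "dk d V U \<le> dk d U V"
    if UV: "set_mset U \<subseteq> X" "set_mset V \<subseteq> X" "size U = size V" for U V
  proof -
    obtain \<Pi> where \<Pi>: "image_mset fst \<Pi> = U" "image_mset snd \<Pi> = V"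
        "dk d U V = (\<Sum>(a,b)\<in>#\<Pi>. d a b)"
      using dk_coupling_attained[OF UV(3)] by blast
    have "dk d V U \<le> (\<Sum>(a,b)\<in>#image_mset prod.swap \<Pi>. d a b)"
      using \<Pi> by (intro dk_le_coupling) (simp_all add: multiset.map_comp comp_def)
    also have "\<dots> = (\<Sum>(a,b)\<in>#\<Pi>. d a b)"
    proof -
      have "d b a = d a b" if "(a,b) \<in># \<Pi>" for a b
      proof -
        have "a \<in># U" "b \<in># V" using that unfolding \<Pi>(1,2)[symmetric] by force+
        then show ?thesis using assms(1) UV(1,2) unfolding finite_metric_space_def by blast
      qed
      then show ?thesis
        by (auto simp: multiset.map_comp intro!: arg_cong[of _ _ sum_mset] image_mset_cong)
    qed
    finally show ?thesis using \<Pi>(3) by simp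
  qed
  then show ?thesis using assms(2-4) by (metis order_antisym)
qed

section \<open>Couplings as multisets of pairs\<close>

lemma sum_mset_eq_sum_count:
  fixes f :: "'a \<Rightarrow> 'b :: comm_semiring_1"
  assumes "set_mset \<Pi> \<subseteq> S" "finite S"
  shows "(\<Sum>e\<in>#\<Pi>. f e) = (\<Sum>e\<in>S. of_nat (count \<Pi> e) * f e)"
  using assms(1)
proof (induction \<Pi>)
  case empty
  then show ?case by simp
next
  case (add a \<Pi>)
  have "(\<Sum>e\<in>S. of_nat (count (add_mset a \<Pi>) e) * f e)
      = (\<Sum>e\<in>S. of_nat (count \<Pi> e) * f e + (if e = a then f e else 0))"
    by (intro sum.cong) (auto simp: algebra_simps)
  then show ?case using add assms(2) by (simp add: sum.distrib add.commute)
qed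

lemma count_image_mset_eq_sum:
  assumes "set_mset \<Pi> \<subseteq> S" "finite S"
  shows "real (count (image_mset g \<Pi>) c) = (\<Sum>e\<in>S. real (count \<Pi> e) * (if g e = c then 1 else 0))"
proof -
  have "real (count (image_mset g \<Pi>) c) = (\<Sum>e\<in>#\<Pi>. if g e = c then 1 else 0)"
    by (induction \<Pi>) auto
  then show ?thesis using sum_mset_eq_sum_count[OF assms] by simp
qed

lemma coupling_marginals_eq_sums:
  fixes \<Pi> :: "('a \<times> 'b) multiset"
  assumes "set_mset \<Pi> \<subseteq> A \<times> B" "finite A" "finite B"
  shows "a \<in> A \<Longrightarrow> real (count (image_mset fst \<Pi>) a) = (\<Sum>b\<in>B. real (count \<Pi> (a,b)))"
    and "b \<in> B \<Longrightarrow> real (count (image_mset snd \<Pi>) b) = (\<Sum>a\<in>A. real (count \<Pi> (a,b)))"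
proof -
  have "\<forall>e. e \<notin> A \<times> B \<longrightarrow> real (count \<Pi> e) = 0"
    using assms(1) by (auto simp flip: not_in_iff)
  note marginals = sum_over_support_row_column[OF assms(2,3) subset_refl this]
  note count_image = count_image_mset_eq_sum[OF assms(1) finite_cartesian_product[OF assms(2,3)]]
  show "a \<in> A \<Longrightarrow> real (count (image_mset fst \<Pi>) a) = (\<Sum>b\<in>B. real (count \<Pi> (a,b)))"
    using marginals(1) count_image[of fst a] by (simp add: mult.commute)
  show "b \<in> B \<Longrightarrow> real (count (image_mset snd \<Pi>) b) = (\<Sum>a\<in>A. real (count \<Pi> (a,b)))"
    using marginals(2) count_image[of snd b] by (simp add: mult.commute)
qed

lemma coupling_of_integral_plan:
  fixes N :: "'a \<times> 'b \<Rightarrow> nat" and f :: "'a \<times> 'b \<Rightarrow> real"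
  assumes "finite A" "finite B"
  defines "\<Pi> \<equiv> \<Sum>e\<in>A \<times> B. replicate_mset (N e) e"
  shows "set_mset \<Pi> \<subseteq> A \<times> B"
    and "a \<in> A \<Longrightarrow> count (image_mset fst \<Pi>) a = (\<Sum>b\<in>B. N (a,b))"
    and "b \<in> B \<Longrightarrow> count (image_mset snd \<Pi>) b = (\<Sum>a\<in>A. N (a,b))"
    and "(\<Sum>e\<in>#\<Pi>. f e) = (\<Sum>e\<in>A \<times> B. real (N e) * f e)"
    and "\<forall>a\<in>A. (\<Sum>b\<in>B. N (a,b)) = count U a \<Longrightarrow> set_mset U \<subseteq> A \<Longrightarrow> image_mset fst \<Pi> = U"
proof -
  have count_\<Pi>: "count \<Pi> e = (if e \<in> A \<times> B then N e else 0)" for e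
    using assms(1,2) by (simp add: \<Pi>_def count_sum)
  then show set_\<Pi>: "set_mset \<Pi> \<subseteq> A \<times> B" by (metis count_eq_zero_iff subsetI)
  note marginals = coupling_marginals_eq_sums[OF set_\<Pi> assms(1,2)]
  show fst_marginal: "count (image_mset fst \<Pi>) a = (\<Sum>b\<in>B. N (a,b))" if "a \<in> A" for a
    using marginals(1)[OF that] count_\<Pi> that by (simp flip: of_nat_sum)
  show "b \<in> B \<Longrightarrow> count (image_mset snd \<Pi>) b = (\<Sum>a\<in>A. N (a,b))"
    using marginals(2) count_\<Pi> by (simp flip: of_nat_sum)
  show "(\<Sum>e\<in>#\<Pi>. f e) = (\<Sum>e\<in>A \<times> B. real (N e) * f e)"
    using sum_mset_eq_sum_count[OF set_\<Pi> finite_cartesian_product[OF assms(1,2)], of f] count_\<Pi>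
    by simp
  show "image_mset fst \<Pi> = U" if "\<forall>a\<in>A. (\<Sum>b\<in>B. N (a,b)) = count U a" "set_mset U \<subseteq> A"
  proof (rule multiset_eqI)
    fix a
    show "count (image_mset fst \<Pi>) a = count U a"
    proof (cases "a \<in> A")
      case False
      then have "a \<notin># image_mset fst \<Pi>" "a \<notin># U" using set_\<Pi> that(2) by auto
      then show ?thesis by (metis count_eq_zero_iff)
    qed (use fst_marginal that(1) in simp)
  qed
qed

lemma mixture_of_couplings:
  fixes p :: "'l \<Rightarrow> real" and \<Pi> :: "'l \<Rightarrow> ('a \<times> 'b) multiset"
  assumes "finite A" "finite B" "\<forall>l\<in>L. set_mset (\<Pi> l) \<subseteq> A \<times> B"
  defines "T \<equiv> \<lambda>e. \<Sum>l\<in>L. p l * real (count (\<Pi> l) e)"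
  shows "a \<in> A \<Longrightarrow> (\<Sum>b\<in>B. T (a,b)) = (\<Sum>l\<in>L. p l * real (count (image_mset fst (\<Pi> l)) a))"
    and "b \<in> B \<Longrightarrow> (\<Sum>a\<in>A. T (a,b)) = (\<Sum>l\<in>L. p l * real (count (image_mset snd (\<Pi> l)) b))"
    and "(\<Sum>e\<in>A \<times> B. w e * T e) = (\<Sum>l\<in>L. p l * (\<Sum>e\<in>#\<Pi> l. w e))"
proof -
  have "(\<Sum>b\<in>B. T (a,b)) = (\<Sum>l\<in>L. p l * (\<Sum>b\<in>B. real (count (\<Pi> l) (a,b))))"
    and "(\<Sum>a\<in>A. T (a,b)) = (\<Sum>l\<in>L. p l * (\<Sum>a\<in>A. real (count (\<Pi> l) (a,b))))"
    and "(\<Sum>e\<in>A \<times> B. w e * T e) = (\<Sum>l\<in>L. p l * (\<Sum>e\<in>A \<times> B. real (count (\<Pi> l) e) * w e))"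
    for a b unfolding T_def sum_distrib_left by (subst sum.swap; simp add: mult_ac)+
  moreover note marginals = coupling_marginals_eq_sums[OF _ assms(1,2)]
  moreover note total =
    sum_mset_eq_sum_count[where f = w, OF _ finite_cartesian_product[OF assms(1,2)]]
  ultimately show "a \<in> A \<Longrightarrow> (\<Sum>b\<in>B. T (a,b)) = (\<Sum>l\<in>L. p l * real (count (image_mset fst (\<Pi> l)) a))"
    and "b \<in> B \<Longrightarrow> (\<Sum>a\<in>A. T (a,b)) = (\<Sum>l\<in>L. p l * real (count (image_mset snd (\<Pi> l)) b))"
    and "(\<Sum>e\<in>A \<times> B. w e * T e) = (\<Sum>l\<in>L. p l * (\<Sum>e\<in>#\<Pi> l. w e))"
    using assms(3) by (auto intro!: sum.cong)
qed

section \<open>Sums over i.i.d. samples\<close>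

lemma sum_lists_length_Suc:
  assumes "finite X"
  shows "(\<Sum>xs\<in>{xs. set xs \<subseteq> X \<and> length xs = Suc n}. f xs)
       = (\<Sum>a\<in>X. \<Sum>xs\<in>{xs. set xs \<subseteq> X \<and> length xs = n}. f (a # xs))"
proof -
  have "inj_on (\<lambda>(xs, a). a # xs) ({xs. set xs \<subseteq> X \<and> length xs = n} \<times> X)"
    by (auto intro: inj_onI)
  then show ?thesis
    by (simp add: lists_length_Suc_eq sum.reindex sum.cartesian_product' sum.swap[of _ X])
qed

lemma sum_prod_list_lists_length:
  fixes P :: "'a \<Rightarrow> real"
  assumes "finite X"
  shows "(\<Sum>xs\<in>{xs. set xs \<subseteq> X \<and> length xs = n}. \<Prod>x\<leftarrow>xs. P x) = (\<Sum>x\<in>X. P x) ^ n"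
proof (induction n)
  case 0
  have "{xs. set xs \<subseteq> X \<and> length xs = 0} = {[]}" by auto
  then show ?case by simp
next
  case (Suc n)
  then show ?case
    by (simp add: sum_lists_length_Suc[OF assms] flip: sum_distrib_left sum_distrib_right)
qed

lemma sum_prod_list_count_lists_length:
  fixes P :: "'a \<Rightarrow> real"
  assumes "finite X" "(\<Sum>x\<in>X. P x) = 1"
  shows "(\<Sum>xs\<in>{xs. set xs \<subseteq> X \<and> length xs = n}. (\<Prod>x\<leftarrow>xs. P x) * real (count (mset xs) y))
         = real n * (if y \<in> X then P y else 0)"
proof (induction n)
  case 0
  have "{xs. set xs \<subseteq> X \<and> length xs = 0} = {[]}" by auto
  then show ?case by simp
next
  case (Suc n)
  let ?L = "{xs. set xs \<subseteq> X \<and> length xs = n}"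
  have "(\<Prod>x\<leftarrow>a # xs. P x) * real (count (mset (a # xs)) y)
      = P a * ((\<Prod>x\<leftarrow>xs. P x) * real (count (mset xs) y)) + (if a = y then P a else 0) * (\<Prod>x\<leftarrow>xs. P x)"
    for a xs by (simp add: algebra_simps)
  then have "(\<Sum>a\<in>X. \<Sum>xs\<in>?L. (\<Prod>x\<leftarrow>a # xs. P x) * real (count (mset (a # xs)) y))
      = (\<Sum>a\<in>X. P a * (\<Sum>xs\<in>?L. (\<Prod>x\<leftarrow>xs. P x) * real (count (mset xs) y)))
        + (\<Sum>a\<in>X. (if a = y then P a else 0) * (\<Sum>xs\<in>?L. \<Prod>x\<leftarrow>xs. P x))"
    by (simp add: sum.distrib sum_distrib_left)
  also have "\<dots> = real (Suc n) * (if y \<in> X then P y else 0)"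
    using Suc assms
    by (simp add: sum_prod_list_lists_length flip: sum_distrib_left sum_distrib_right)
      (simp add: algebra_simps)
  finally show ?case by (simp add: sum_lists_length_Suc[OF assms(1)])
qed

lemma prod_list_nonneg_sample:
  "prob_dist X P \<Longrightarrow> set xs \<subseteq> X \<Longrightarrow> 0 \<le> (\<Prod>x\<leftarrow>xs. P x)"
  unfolding prob_dist_def by (force intro: prod_list_nonneg)

section \<open>Rounding the expected optimal coupling\<close>

lemma expected_optimal_coupling:
  assumes "finite X" "prob_dist X P" "Opt \<in> kmsets X k"
  shows "\<exists>T. (\<forall>e. 0 \<le> T e) \<and> (\<forall>y\<in>X. (\<Sum>x\<in>X. T (y,x)) = real (count Opt y)) \<and>
    (\<forall>x\<in>X. (\<Sum>y\<in>X. T (y,x)) = P x * real k) \<and>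
    (\<Sum>e\<in>X \<times> X. d (fst e) (snd e) * T e) = krp_cost X d P k Opt"
proof -
  define L where "L = {xs. set xs \<subseteq> X \<and> length xs = k}"
  define p where "p xs = (\<Prod>x\<leftarrow>xs. P x)" for xs
  have p_nonneg: "0 \<le> p xs" if "xs \<in> L" for xs
    using that prod_list_nonneg_sample[OF assms(2)] by (simp add: L_def p_def)
  have p_sum: "(\<Sum>xs\<in>L. p xs) = 1"
    using sum_prod_list_lists_length[OF assms(1)] assms(2) by (simp add: L_def p_def prob_dist_def)
  have "\<forall>xs\<in>L. \<exists>\<Pi>. image_mset fst \<Pi> = Opt \<and> image_mset snd \<Pi> = mset xs \<and>
      dk d Opt (mset xs) = (\<Sum>(a,b)\<in>#\<Pi>. d a b)"
    using assms(3) by (auto simp: L_def kmsets_def intro: dk_coupling_attained)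
  then obtain \<Pi> where \<Pi>: "\<And>xs. xs \<in> L \<Longrightarrow> image_mset fst (\<Pi> xs) = Opt \<and>
      image_mset snd (\<Pi> xs) = mset xs \<and> dk d Opt (mset xs) = (\<Sum>(a,b)\<in>#\<Pi> xs. d a b)"
    by metis
  have "\<forall>xs\<in>L. set_mset (\<Pi> xs) \<subseteq> X \<times> X"
  proof (intro ballI subsetI)
    fix xs e assume "xs \<in> L" "e \<in># \<Pi> xs"
    then have "fst e \<in># image_mset fst (\<Pi> xs)" "snd e \<in># image_mset snd (\<Pi> xs)" by auto
    then show "e \<in> X \<times> X"
      using \<Pi>[OF \<open>xs \<in> L\<close>] \<open>xs \<in> L\<close> assms(3) by (auto simp: L_def kmsets_def mem_Times_iff)
  qed
  note mixture = mixture_of_couplings[OF assms(1) assms(1) this, where p = p]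
  define T where "T e = (\<Sum>xs\<in>L. p xs * real (count (\<Pi> xs) e))" for e
  have "0 \<le> T e" for e
    using p_nonneg by (auto simp: T_def intro!: sum_nonneg)
  moreover have "(\<Sum>x\<in>X. T (y,x)) = real (count Opt y)" if "y \<in> X" for y
    using mixture(1)[OF that] \<Pi> p_sum by (simp add: T_def flip: sum_distrib_right)
  moreover have "(\<Sum>y\<in>X. T (y,x)) = P x * real k" if "x \<in> X" for x
    using mixture(2)[OF that] \<Pi> that assms(2)
      sum_prod_list_count_lists_length[OF assms(1), where P = P and n = k and y = x]
    by (simp add: T_def L_def p_def prob_dist_def)
  moreover have "(\<Sum>e\<in>X \<times> X. d (fst e) (snd e) * T e) = krp_cost X d P k Opt"
    using mixture(3) \<Pi> by (simp add: T_def krp_cost_def L_def p_def case_prod_unfold)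
  ultimately show ?thesis by blast
qed

lemma krp_cost_nonneg:
  assumes "finite_metric_space X d" "prob_dist X P" "S \<in> kmsets X k"
  shows "0 \<le> krp_cost X d P k S"
  unfolding krp_cost_def
proof (intro sum_nonneg mult_nonneg_nonneg)
  fix xs assume "xs \<in> {xs. set xs \<subseteq> X \<and> length xs = k}"
  then show "0 \<le> (\<Prod>x\<leftarrow>xs. P x)" using prod_list_nonneg_sample[OF assms(2)] by simp
  show "0 \<le> dk d S (mset xs)"
    using \<open>xs \<in> _\<close> assms(3) by (intro dk_nonneg[OF assms(1)]) (auto simp: kmsets_def)
qed

lemma krp_cost_le_dk_add_krp_cost:
  assumes "finite_metric_space X d" "prob_dist X P" "S \<in> kmsets X k" "Opt \<in> kmsets X k"
  shows "krp_cost X d P k S \<le> dk d S Opt + krp_cost X d P k Opt"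
proof -
  let ?L = "{xs. set xs \<subseteq> X \<and> length xs = k}"
  have "krp_cost X d P k S \<le> (\<Sum>xs\<in>?L. (\<Prod>x\<leftarrow>xs. P x) * (dk d S Opt + dk d Opt (mset xs)))"
    unfolding krp_cost_def
  proof (intro sum_mono mult_left_mono)
    fix xs assume "xs \<in> ?L"
    then show "dk d S (mset xs) \<le> dk d S Opt + dk d Opt (mset xs)"
      using assms(3,4) by (intro dk_triangle[OF assms(1)]) (auto simp: kmsets_def)
    show "0 \<le> (\<Prod>x\<leftarrow>xs. P x)" using \<open>xs \<in> ?L\<close> prod_list_nonneg_sample[OF assms(2)] by simp
  qed
  also have "\<dots> = dk d S Opt + krp_cost X d P k Opt"
    using sum_prod_list_lists_length[of X P k] assms(1,2)
    by (simp add: krp_cost_def distrib_left sum.distrib prob_dist_def finite_metric_space_def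
        flip: sum_distrib_right)
  finally show ?thesis .
qed

lemma rounded_multiset_exists:
  assumes "finite_metric_space X d" "prob_dist X P" "Opt \<in> kmsets X k"
  shows "\<exists>S\<in>kmsets X k.
    (\<forall>x\<in>X. \<lfloor>P x * real k\<rfloor> \<le> int (count S x) \<and> int (count S x) \<le> \<lceil>P x * real k\<rceil>) \<and>
    dk d S Opt \<le> krp_cost X d P k Opt"
proof -
  have "finite X" using assms(1) by (simp add: finite_metric_space_def)
  obtain T where T: "\<forall>e. 0 \<le> T e" "\<forall>y\<in>X. (\<Sum>x\<in>X. T (y,x)) = real (count Opt y)"
      "\<forall>x\<in>X. (\<Sum>y\<in>X. T (y,x)) = P x * real k"
      "(\<Sum>e\<in>X \<times> X. d (fst e) (snd e) * T e) = krp_cost X d P k Opt"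
    using expected_optimal_coupling[OF \<open>finite X\<close> assms(2,3)] by blast
  obtain N where N: "\<forall>y\<in>X. (\<Sum>x\<in>X. N (y,x)) = count Opt y"
      "\<forall>x\<in>X. \<lfloor>P x * real k\<rfloor> \<le> int (\<Sum>y\<in>X. N (y,x)) \<and> int (\<Sum>y\<in>X. N (y,x)) \<le> \<lceil>P x * real k\<rceil>"
      "(\<Sum>e\<in>X \<times> X. d (fst e) (snd e) * real (N e)) \<le> krp_cost X d P k Opt"
    using integral_plan_with_rounded_column_sums[OF \<open>finite X\<close> \<open>finite X\<close>,
        of T "\<lambda>e. d (fst e) (snd e)"] T by (auto simp flip: of_nat_sum)
  define \<Pi> where "\<Pi> = (\<Sum>e\<in>X \<times> X. replicate_mset (N e) e)"
  note \<Pi> = coupling_of_integral_plan[OF \<open>finite X\<close> \<open>finite X\<close>, where N = N, folded \<Pi>_def]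
  have "image_mset fst \<Pi> = Opt" using \<Pi>(5) N(1) assms(3) by (simp add: kmsets_def)
  define S where "S = image_mset snd \<Pi>"
  have "S \<in> kmsets X k"
    using \<open>image_mset fst \<Pi> = Opt\<close> \<Pi>(1) assms(3) by (auto simp: S_def kmsets_def)
  moreover have "dk d S Opt \<le> krp_cost X d P k Opt"
  proof -
    have "dk d Opt S \<le> (\<Sum>(a,b)\<in>#\<Pi>. d a b)"
      using \<open>image_mset fst \<Pi> = Opt\<close> by (intro dk_le_coupling) (simp_all add: S_def)
    also have "\<dots> = (\<Sum>e\<in>X \<times> X. d (fst e) (snd e) * real (N e))"
      using \<Pi>(4) by (simp add: case_prod_unfold mult.commute)
    finally show ?thesis
      using N(3) dk_commute[OF assms(1)] \<open>S \<in> kmsets X k\<close> assms(3) by (simp add: kmsets_def)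
  qed
  moreover have "\<forall>x\<in>X. \<lfloor>P x * real k\<rfloor> \<le> int (count S x) \<and> int (count S x) \<le> \<lceil>P x * real k\<rceil>"
    using N(2) \<Pi>(3) by (simp add: S_def)
  ultimately show ?thesis by blast
qed

lemma resid_nonneg: "0 < k \<Longrightarrow> 0 \<le> resid P k x"
  by (simp add: resid_def pos_divide_le_eq)

lemma resid_pos: "0 < k \<Longrightarrow> P x * real k \<notin> \<int> \<Longrightarrow> 0 < resid P k x"
  using of_int_floor_le[of "P x * real k"]
  by (auto simp: resid_def pos_divide_less_eq order.order_iff_strict)

lemma ptilde_prob_pos:
  assumes "finite X" "0 < k" "S \<in> kmsets X k"
    and bounds: "\<forall>x\<in>X. \<lfloor>P x * real k\<rfloor> \<le> int (count S x) \<and> int (count S x) \<le> \<lceil>P x * real k\<rceil>"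
  shows "0 < ptilde_prob X P k S"
proof -
  let ?B = "base_ms X P k"
  have count_B: "count ?B x = (if x \<in> X then nat \<lfloor>P x * real k\<rfloor> else 0)" for x
    using assms(1) by (simp add: base_ms_def count_sum)
  have "?B \<subseteq># S"
    using bounds by (intro mset_subset_eqI) (auto simp: count_B)
  then obtain ys where ys: "?B + mset ys = S"
    by (metis ex_mset subset_mset.add_diff_inverse)
  have "set ys \<subseteq> X" "length ys = rem_count X P k"
    using ys assms(3) unfolding kmsets_def rem_count_def by (auto simp flip: size_mset)
  have resid_prob_pos: "0 < resid_prob X P k y" if "y \<in> set ys" for y
  proof -
    have "y \<in> X" using that \<open>set ys \<subseteq> X\<close> by blast
    have "count ?B y < count S y" using that ys by (auto simp flip: ys)
    then have "\<lfloor>P y * real k\<rfloor> < \<lceil>P y * real k\<rceil>"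
      using bounds \<open>y \<in> X\<close> count_B by force
    then have "P y * real k \<notin> \<int>" by (auto elim!: Ints_cases)
    then have "0 < resid P k y" by (rule resid_pos[OF assms(2)])
    moreover have "0 < (\<Sum>x\<in>X. resid P k x)"
      using \<open>y \<in> X\<close> \<open>0 < resid P k y\<close> resid_nonneg[OF assms(2)] by (intro sum_pos2[OF assms(1)])
    ultimately show ?thesis by (simp add: resid_prob_def)
  qed
  have resid_prob_nonneg: "0 \<le> resid_prob X P k y" for y
    using resid_nonneg[OF assms(2)] unfolding resid_prob_def
    by (intro divide_nonneg_nonneg sum_nonneg)
  show ?thesis
    unfolding ptilde_prob_def
  proof (rule sum_pos2)
    show "finite {ys. set ys \<subseteq> X \<and> length ys = rem_count X P k \<and> ?B + mset ys = S}"
      by (rule finite_subset[OF _ finite_lists_length_eq[OF assms(1)]]) auto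
    show "ys \<in> {ys. set ys \<subseteq> X \<and> length ys = rem_count X P k \<and> ?B + mset ys = S}"
      using \<open>set ys \<subseteq> X\<close> \<open>length ys = rem_count X P k\<close> ys by simp
    show "0 < (\<Prod>y\<leftarrow>ys. resid_prob X P k y)"
      using resid_prob_pos by (induction ys) (auto intro: mult_pos_pos)
  next
    fix zs
    show "0 \<le> (\<Prod>y\<leftarrow>zs. resid_prob X P k y)"
      by (rule prod_list_nonneg) (auto intro: resid_prob_nonneg)
  qed
qed

theorem corollary2:
  fixes X :: "'a set" and d :: "'a \<Rightarrow> 'a \<Rightarrow> real" and P :: "'a \<Rightarrow> real"
    and k :: nat and Opt :: "'a multiset"
  assumes "finite_metric_space X d"
    and "prob_dist X P"
    and "k \<ge> 1"
    and "Opt \<in> kmsets X k"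
    and "\<forall>S\<in>kmsets X k. krp_cost X d P k Opt \<le> krp_cost X d P k S"
  shows "\<exists>S\<in>kmsets X k. ptilde_prob X P k S > 0 \<and>
           krp_cost X d P k S \<le> 4 * krp_cost X d P k Opt"
proof -
  obtain S where S: "S \<in> kmsets X k"
      "\<forall>x\<in>X. \<lfloor>P x * real k\<rfloor> \<le> int (count S x) \<and> int (count S x) \<le> \<lceil>P x * real k\<rceil>"
      "dk d S Opt \<le> krp_cost X d P k Opt"
    using rounded_multiset_exists[OF assms(1,2,4)] by blast
  have "0 < ptilde_prob X P k S"
    using ptilde_prob_pos[OF _ _ S(1,2)] assms(1,3) by (simp add: finite_metric_space_def)
  moreover have "krp_cost X d P k S \<le> 2 * krp_cost X d P k Opt"
    using krp_cost_le_dk_add_krp_cost[OF assms(1,2) S(1) assms(4)] S(3) by linarith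
  moreover have "0 \<le> krp_cost X d P k Opt"
    by (rule krp_cost_nonneg[OF assms(1,2,4)])
  ultimately show ?thesis using S(1) by force
qed

end
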